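(* Let $G$ be an ADMG on $n$ vertices, and suppose there are $m$ distinct vertex subsets $V_1,\dots,V_m$ with $|V_i|=3$ such that for each $i$ the vertices of $V_i$ can be ordered as $(a_i,b_i,c_i)$ so that $G$ contains the edges $a_i\to b_i$, $b_i\to c_i$ and $b_i\leftrightarrow c_i$. Then $|\mathrm{MEC}(G)|\ge 2^{m/(3n)}$.
   Context: An ADMG (acyclic directed mixed graph) has directed edges $v\to w$ forming no directed cycle and bidirected edges $v\leftrightarrow w$, $v\ne w$. Markov equivalence is defined via d-separation: a path between $a\ne b$ is a sequence of vertices (repeats allowed) with specified edges (directed either way, or bidirected) between consecutive ones; an internal vertex is a collider if both adjacent path-edges have an arrowhead at it; the path is active given $Z$ if every internal non-collider is outside $Z$ and every collider is in $Z$ or has a descendant (itself or a vertex reachable by a directed path) in $Z$; $a,b$ are d-separated given $Z$ if no active path exists. Two graphs are Markov equivalent if they have the same d-separations. $\mathrm{MEC}(G)$ is the set of ADMGs on the same vertex set Markov equivalent to $G$. *)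

theory Defs
  imports Complex_Main
begin

text \<open>An ADMG on vertex set V is a pair (D, B): D the directed edges (u,w) meaning u \<rightarrow> w,
  B the bidirected edges, stored as a symmetric irreflexive relation ((u,w) \<in> B means u \<leftrightarrow> w).\<close>

type_synonym 'v admg = "('v \<times> 'v) set \<times> ('v \<times> 'v) set"

definition is_admg :: "'v set \<Rightarrow> 'v admg \<Rightarrow> bool" where
  "is_admg V G \<longleftrightarrow> fst G \<subseteq> V \<times> V \<and> snd G \<subseteq> V \<times> V \<and> acyclic (fst G)
     \<and> sym (snd G) \<and> irrefl (snd G)"

datatype ekind = Fwd | Bwd | Bid

fun edge_ok :: "'v admg \<Rightarrow> ekind \<Rightarrow> 'v \<Rightarrow> 'v \<Rightarrow> bool" where
  "edge_ok G Fwd x y = ((x, y) \<in> fst G)"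
| "edge_ok G Bwd x y = ((y, x) \<in> fst G)"
| "edge_ok G Bid x y = ((x, y) \<in> snd G)"

fun head_at_target :: "ekind \<Rightarrow> bool" where
  "head_at_target Fwd = True" | "head_at_target Bwd = False" | "head_at_target Bid = True"

fun head_at_source :: "ekind \<Rightarrow> bool" where
  "head_at_source Fwd = False" | "head_at_source Bwd = True" | "head_at_source Bid = True"

text \<open>A path: vertex list vs (repeats allowed) and edge list ks with length ks = length vs - 1,
  ks!i being an edge of G between vs!i and vs!(i+1).\<close>

definition is_path :: "'v admg \<Rightarrow> 'v list \<Rightarrow> ekind list \<Rightarrow> bool" where
  "is_path G vs ks \<longleftrightarrow> vs \<noteq> [] \<and> length ks = length vs - 1 \<and>
     (\<forall>i < length ks. edge_ok G (ks ! i) (vs ! i) (vs ! Suc i))"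

definition is_collider :: "ekind list \<Rightarrow> nat \<Rightarrow> bool" where
  "is_collider ks i \<longleftrightarrow> head_at_target (ks ! (i - 1)) \<and> head_at_source (ks ! i)"

definition has_desc_in :: "'v admg \<Rightarrow> 'v \<Rightarrow> 'v set \<Rightarrow> bool" where
  "has_desc_in G c Z \<longleftrightarrow> (\<exists>z \<in> Z. (c, z) \<in> (fst G)\<^sup>*)"

definition active_path :: "'v admg \<Rightarrow> 'v set \<Rightarrow> 'v list \<Rightarrow> ekind list \<Rightarrow> bool" where
  "active_path G Z vs ks \<longleftrightarrow> is_path G vs ks \<and>
     (\<forall>i. 0 < i \<and> i < length ks \<longrightarrow>
        (if is_collider ks i then has_desc_in G (vs ! i) Z else vs ! i \<notin> Z))"

definition d_separated :: "'v admg \<Rightarrow> 'v \<Rightarrow> 'v \<Rightarrow> 'v set \<Rightarrow> bool" where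
  "d_separated G a b Z \<longleftrightarrow>
     \<not> (\<exists>vs ks. active_path G Z vs ks \<and> hd vs = a \<and> last vs = b)"

definition markov_equiv :: "'v set \<Rightarrow> 'v admg \<Rightarrow> 'v admg \<Rightarrow> bool" where
  "markov_equiv V G H \<longleftrightarrow>
     (\<forall>a \<in> V. \<forall>b \<in> V. \<forall>Z. a \<noteq> b \<longrightarrow> Z \<subseteq> V \<longrightarrow>
        (d_separated G a b Z \<longleftrightarrow> d_separated H a b Z))"

definition MEC :: "'v set \<Rightarrow> 'v admg \<Rightarrow> 'v admg set" where
  "MEC V G = {H. is_admg V H \<and> markov_equiv V G H}"

end

theory Submission
  imports Defs
begin

(* If a \<rightarrow> b \<rightarrow> c and b \<leftrightarrow> c, the edge a \<rightarrow> c is invisible to d-separation: it does not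
   change the ancestor relation, and an active path through it can be rerouted as a \<rightarrow> b \<leftrightarrow> c
   when b is conditioned on and as a \<rightarrow> b \<rightarrow> c otherwise, with the same marks at a and c.
   So each of the shortcut edges a\<^sub>i \<rightarrow> c\<^sub>i may independently be kept or deleted, giving 2^|Q|
   distinct graphs in the class, Q being the set of pairs (a\<^sub>i, c\<^sub>i). A triple is determined by
   (a\<^sub>i, c\<^sub>i) together with b\<^sub>i, so m \<le> |Q| n. *)

definition junction_open :: "'v admg \<Rightarrow> 'v set \<Rightarrow> 'v \<Rightarrow> bool \<Rightarrow> bool \<Rightarrow> bool" where
  "junction_open G Z y h1 h2 \<longleftrightarrow> (if h1 \<and> h2 then has_desc_in G y Z else y \<notin> Z)"

lemma active_path_iff_junctions:
  "active_path G Z vs ks \<longleftrightarrow> is_path G vs ks \<and>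
     (\<forall>i. 0 < i \<and> i < length ks \<longrightarrow>
        junction_open G Z (vs ! i) (head_at_target (ks ! (i - 1))) (head_at_source (ks ! i)))"
  by (simp add: active_path_def junction_open_def is_collider_def)

lemma active_path_single: "active_path G Z [x, y] [k] \<longleftrightarrow> edge_ok G k x y"
  by (simp add: active_path_def is_path_def)

lemma active_path_snoc_iff:
  assumes "ks \<noteq> []"
  shows "active_path G Z (vs @ [z]) (ks @ [k]) \<longleftrightarrow>
    active_path G Z vs ks \<and> edge_ok G k (last vs) z \<and>
    junction_open G Z (last vs) (head_at_target (last ks)) (head_at_source k)"
proof (cases "length vs = Suc (length ks)")
  case True
  define n where "n = length ks"
  have "vs \<noteq> []" and last_vs: "last vs = vs ! n"
    using True unfolding n_def by (metis diff_Suc_1 last_conv_nth list.size(3) nat.distinct(1))+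
  have last_ks: "last ks = ks ! (n - 1)" and "0 < n"
    using assms unfolding n_def by (simp_all add: last_conv_nth)
  have split: "(\<forall>i < Suc n. P i) \<longleftrightarrow> (\<forall>i < n. P i) \<and> P n"
    and split_inner: "(\<forall>i. 0 < i \<and> i < Suc n \<longrightarrow> P i) \<longleftrightarrow> (\<forall>i. 0 < i \<and> i < n \<longrightarrow> P i) \<and> P n" for P
    using \<open>0 < n\<close> by (auto simp: less_Suc_eq)
  have "(\<forall>i < Suc n. edge_ok G ((ks @ [k]) ! i) ((vs @ [z]) ! i) ((vs @ [z]) ! Suc i))
     \<longleftrightarrow> (\<forall>i < n. edge_ok G (ks ! i) (vs ! i) (vs ! Suc i)) \<and> edge_ok G k (last vs) z"
    unfolding split using True by (simp add: n_def nth_append last_vs)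
  moreover have "(\<forall>i. 0 < i \<and> i < Suc n \<longrightarrow> junction_open G Z ((vs @ [z]) ! i)
        (head_at_target ((ks @ [k]) ! (i - 1))) (head_at_source ((ks @ [k]) ! i)))
     \<longleftrightarrow> (\<forall>i. 0 < i \<and> i < n \<longrightarrow> junction_open G Z (vs ! i)
        (head_at_target (ks ! (i - 1))) (head_at_source (ks ! i))) \<and>
        junction_open G Z (last vs) (head_at_target (last ks)) (head_at_source k)"
    unfolding split_inner using True \<open>0 < n\<close> by (auto simp: n_def nth_append last_vs last_ks)
  ultimately show ?thesis
    using True \<open>vs \<noteq> []\<close> unfolding active_path_iff_junctions is_path_def n_def
    by auto
next
  case False
  then show ?thesis
    using assms by (auto simp: active_path_def is_path_def)
qed

text \<open>\<open>d_connecting G Z x y hx hy\<close>: some active path from x to y with at least one edge has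
  an arrowhead at x iff hx and an arrowhead at y iff hy.\<close>

inductive d_connecting :: "'v admg \<Rightarrow> 'v set \<Rightarrow> 'v \<Rightarrow> 'v \<Rightarrow> bool \<Rightarrow> bool \<Rightarrow> bool"
  for G Z where
  edge: "edge_ok G k x y \<Longrightarrow> d_connecting G Z x y (head_at_source k) (head_at_target k)"
| snoc: "d_connecting G Z x y hx hy \<Longrightarrow> edge_ok G k y z \<Longrightarrow>
    junction_open G Z y hy (head_at_source k) \<Longrightarrow>
    d_connecting G Z x z hx (head_at_target k)"

lemma d_connecting_imp_active_path:
  assumes "d_connecting G Z x y hx hy"
  shows "\<exists>vs ks. active_path G Z vs ks \<and> hd vs = x \<and> last vs = y \<and> ks \<noteq> [] \<and>
           head_at_source (hd ks) = hx \<and> head_at_target (last ks) = hy"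
  using assms
proof induction
  case (edge k x y)
  then have "active_path G Z [x, y] [k]"
    by (simp add: active_path_single)
  then show ?case by fastforce
next
  case (snoc x y hx hy k z)
  then obtain vs ks where "active_path G Z vs ks" "hd vs = x" "last vs = y" "ks \<noteq> []"
    "head_at_source (hd ks) = hx" "head_at_target (last ks) = hy"
    by blast
  moreover from this have "vs \<noteq> []"
    by (simp add: active_path_def is_path_def)
  ultimately have "active_path G Z (vs @ [z]) (ks @ [k]) \<and> hd (vs @ [z]) = x \<and>
      head_at_source (hd (ks @ [k])) = hx"
    using snoc.hyps by (simp add: active_path_snoc_iff)
  then show ?case by fastforce
qed

lemma active_path_imp_d_connecting:
  assumes "active_path G Z vs ks" "ks \<noteq> []"
  shows "d_connecting G Z (hd vs) (last vs) (head_at_source (hd ks)) (head_at_target (last ks))"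
  using assms
proof (induction ks arbitrary: vs rule: rev_induct)
  case Nil
  then show ?case by simp
next
  case (snoc k ks)
  then have "length vs = Suc (Suc (length ks))"
    by (simp add: active_path_def is_path_def)
  then obtain vs' z where vs: "vs = vs' @ [z]" and "length vs' = Suc (length ks)"
    by (metis length_Suc_conv_rev)
  show ?case
  proof (cases "ks = []")
    case True
    then obtain x where "vs = [x, z]"
      using vs \<open>length vs' = Suc (length ks)\<close> by (auto simp: length_Suc_conv)
    then show ?thesis
      using snoc.prems True by (simp add: active_path_single d_connecting.edge)
  next
    case False
    with snoc.prems have "active_path G Z vs' ks" "edge_ok G k (last vs') z"
      "junction_open G Z (last vs') (head_at_target (last ks)) (head_at_source k)"
      by (simp_all add: vs active_path_snoc_iff)
    moreover have "vs' \<noteq> []"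
      using \<open>length vs' = Suc (length ks)\<close> by auto
    ultimately show ?thesis
      using snoc.IH False by (auto simp: vs intro: d_connecting.snoc)
  qed
qed

lemma d_separated_iff_not_d_connecting:
  assumes "a \<noteq> b"
  shows "d_separated G a b Z \<longleftrightarrow> \<not> (\<exists>ha hb. d_connecting G Z a b ha hb)"
proof -
  have "ks \<noteq> []" if "active_path G Z vs ks" "hd vs = a" "last vs = b" for vs ks
    using that assms by (cases vs) (auto simp: active_path_def is_path_def)
  then show ?thesis
    unfolding d_separated_def
    by (metis active_path_imp_d_connecting d_connecting_imp_active_path)
qed

lemma d_connecting_trans:
  assumes "d_connecting G Z x y hx hy" "d_connecting G Z y z hy' hz" "junction_open G Z y hy hy'"
  shows "d_connecting G Z x z hx hz"
  using assms(2,1,3)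
proof (induction arbitrary: x hx hy rule: d_connecting.induct)
  case (edge k y z)
  then show ?case by (blast intro: d_connecting.snoc)
next
  case (snoc y w hy' hw k z)
  then show ?case by (metis d_connecting.snoc)
qed

fun reverse_kind :: "ekind \<Rightarrow> ekind" where
  "reverse_kind Fwd = Bwd" | "reverse_kind Bwd = Fwd" | "reverse_kind Bid = Bid"

lemma d_connecting_converse:
  assumes "sym (snd G)" "d_connecting G Z x y hx hy"
  shows "d_connecting G Z y x hy hx"
  using assms(2)
proof induction
  case (edge k x y)
  then show ?case
    using assms(1) d_connecting.edge[of G "reverse_kind k" y x Z]
    by (cases k) (auto dest: symD)
next
  case (snoc x y hx hy k z)
  have "d_connecting G Z z y (head_at_target k) (head_at_source k)"
    using snoc.hyps(2) assms(1) d_connecting.edge[of G "reverse_kind k" z y Z]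
    by (cases k) (auto dest: symD)
  moreover have "junction_open G Z y (head_at_source k) hy"
    using snoc.hyps(3) by (auto simp: junction_open_def)
  ultimately show ?case
    using snoc.IH d_connecting_trans by metis
qed

lemma d_connecting_mono:
  assumes "fst G \<subseteq> fst H" "snd G \<subseteq> snd H" "(fst G)\<^sup>* = (fst H)\<^sup>*"
    and "d_connecting G Z x y hx hy"
  shows "d_connecting H Z x y hx hy"
proof -
  have edge_ok: "edge_ok G k u w \<Longrightarrow> edge_ok H k u w" for k u w
    using assms(1,2) by (cases k) auto
  have "junction_open G = junction_open H"
    using assms(3) by (simp add: fun_eq_iff junction_open_def has_desc_in_def)
  with assms(4) show ?thesis
    by induction (auto intro: d_connecting.intros edge_ok)
qed

definition shortcuts :: "('v \<times> 'v) set \<Rightarrow> ('v \<times> 'v) set \<Rightarrow> ('v \<times> 'v) set" where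
  "shortcuts D B = {(x, y). \<exists>b. (x, b) \<in> D \<and> (b, y) \<in> D \<and> (b, y) \<in> B}"

lemma shortcuts_subset_trancl: "shortcuts D B \<subseteq> D\<^sup>+"
  by (auto simp: shortcuts_def)

locale shortcut_extension =
  fixes D0 D B :: "('v \<times> 'v) set"
  assumes finite: "finite D" and acyclic: "acyclic D" and sym: "sym B"
    and subset: "D0 \<subseteq> D" and shortcuts: "D - D0 \<subseteq> shortcuts D B"
begin

text \<open>The edges x \<rightarrow> b and b \<rightarrow> y replacing a shortcut x \<rightarrow> y may themselves be shortcuts;
  the recursion terminates because b lies strictly between x and y in the acyclic D.\<close>

lemma shortcut_induct [consumes 1, case_names base step]:
  assumes "(x, y) \<in> D"
    and base: "\<And>x y. (x, y) \<in> D0 \<Longrightarrow> P x y"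
    and step: "\<And>x b y. (b, y) \<in> B \<Longrightarrow> P x b \<Longrightarrow> P b y \<Longrightarrow> P x y"
  shows "P x y"
proof -
  let ?R = "inv_image (D\<^sup>+ <*lex*> (D\<^sup>+)\<inverse>) (\<lambda>(x, y). (y, x))"
  have "wf (D\<^sup>+)" "wf ((D\<^sup>+)\<inverse>)"
    using finite_acyclic_wf[OF finite acyclic] finite_acyclic_wf_converse[OF finite acyclic]
    by (simp_all add: wf_trancl flip: trancl_converse)
  then have "wf ?R"
    by (intro wf_inv_image wf_lex_prod)
  then show ?thesis
    using \<open>(x, y) \<in> D\<close>
  proof (induction "(x, y)" arbitrary: x y rule: wf_induct_rule)
    case less
    show ?case
    proof (cases "(x, y) \<in> D0")
      case False
      then obtain b where "(x, b) \<in> D" "(b, y) \<in> D" "(b, y) \<in> B"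
        using shortcuts less.prems by (auto simp: shortcuts_def)
      then show ?thesis
        using less.hyps by (intro step[of b y x]) auto
    qed (rule base)
  qed
qed

lemma rtrancl_eq: "D0\<^sup>* = D\<^sup>*"
proof
  show "D0\<^sup>* \<subseteq> D\<^sup>*"
    using subset by (rule rtrancl_mono)
  have "D \<subseteq> D0\<^sup>*"
    by (auto elim: shortcut_induct)
  then show "D\<^sup>* \<subseteq> D0\<^sup>*"
    by (rule rtrancl_subset_rtrancl)
qed

lemma edge_d_connecting: "(x, y) \<in> D \<Longrightarrow> d_connecting (D0, B) Z x y False True"
proof (induction rule: shortcut_induct)
  case (base x y)
  then show ?case
    using d_connecting.edge[of "(D0, B)" Fwd x y Z] by simp
next
  case (step x b y)
  show ?case
  proof (cases "b \<in> Z")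
    case True
    have "d_connecting (D0, B) Z b y True True"
      using d_connecting.edge[of "(D0, B)" Bid b y Z] step by simp
    moreover have "junction_open (D0, B) Z b True True"
      using True by (auto simp: junction_open_def has_desc_in_def)
    ultimately show ?thesis
      using step d_connecting_trans by metis
  next
    case False
    then have "junction_open (D0, B) Z b True False"
      by (simp add: junction_open_def)
    then show ?thesis
      using step d_connecting_trans by metis
  qed
qed

lemma edge_ok_imp_d_connecting:
  assumes "edge_ok (D, B) k y z"
  shows "d_connecting (D0, B) Z y z (head_at_source k) (head_at_target k)"
proof (cases k)
  case Fwd
  then show ?thesis
    using assms edge_d_connecting by simp
next
  case Bwd
  then have "d_connecting (D0, B) Z z y False True"
    using assms edge_d_connecting by simp
  then have "d_connecting (D0, B) Z y z True False"
    by (rule d_connecting_converse[rotated]) (simp add: sym)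
  then show ?thesis
    using Bwd by simp
next
  case Bid
  then show ?thesis
    using assms d_connecting.edge[of "(D0, B)" Bid y z Z] by simp
qed

lemma d_connecting_remove_shortcuts:
  assumes "d_connecting (D, B) Z x y hx hy"
  shows "d_connecting (D0, B) Z x y hx hy"
proof -
  have "junction_open (D, B) = junction_open (D0, B)"
    using rtrancl_eq by (simp add: fun_eq_iff junction_open_def has_desc_in_def)
  with assms show ?thesis
  proof induction
    case (edge k x y)
    then show ?case by (simp add: edge_ok_imp_d_connecting)
  next
    case (snoc x y hx hy k z)
    then show ?case
      using edge_ok_imp_d_connecting d_connecting_trans by metis
  qed
qed

lemma markov_equiv_between:
  assumes "D0 \<subseteq> D1" "D1 \<subseteq> D"
  shows "markov_equiv V (D1, B) (D, B)"
proof -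
  have "D0\<^sup>* = D1\<^sup>*" "D1\<^sup>* = D\<^sup>*"
    using rtrancl_eq rtrancl_mono[OF assms(1)] rtrancl_mono[OF assms(2)] by auto
  then have "d_connecting (D1, B) Z x y hx hy \<longleftrightarrow> d_connecting (D, B) Z x y hx hy" for Z x y hx hy
    using assms d_connecting_mono[of "(D1, B)" "(D, B)"] d_connecting_mono[of "(D0, B)" "(D1, B)"]
      d_connecting_remove_shortcuts by auto
  then show ?thesis
    by (simp add: markov_equiv_def d_separated_iff_not_d_connecting)
qed

end

lemma finite_MEC: "finite V \<Longrightarrow> finite (MEC V G)"
  by (rule finite_subset[of _ "Pow (V \<times> V) \<times> Pow (V \<times> V)"])
    (auto simp: MEC_def is_admg_def)

lemma shortcut_variant_in_MEC:
  assumes "finite V" "is_admg V (D, B)" "Q \<subseteq> shortcuts D B" "S \<subseteq> Q"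
  shows "(D - Q \<union> S, B) \<in> MEC V (D, B)"
proof -
  have admg: "D \<subseteq> V \<times> V" "B \<subseteq> V \<times> V" "acyclic D" "sym B" "irrefl B"
    using assms(2) by (simp_all add: is_admg_def)
  have "Q \<subseteq> D\<^sup>+"
    using assms(3) shortcuts_subset_trancl by blast
  then have "(D \<union> Q)\<^sup>+ = D\<^sup>+"
    by (rule trancl_absorb_subset_trancl)
  then have "acyclic (D \<union> Q)" "D \<union> Q \<subseteq> V \<times> V"
    using admg trancl_subset_Sigma[of D V] trancl_incr[of "D \<union> Q"]
    by (auto simp: acyclic_def)
  moreover have "D \<union> Q - (D - Q) \<subseteq> shortcuts (D \<union> Q) B"
    using assms(3) by (auto simp: shortcuts_def)
  ultimately interpret shortcut_extension "D - Q" "D \<union> Q" B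
    using assms(1) admg(4) finite_subset[of "D \<union> Q" "V \<times> V"]
    by unfold_locales auto
  have "markov_equiv V (D, B) (D \<union> Q, B)" "markov_equiv V (D - Q \<union> S, B) (D \<union> Q, B)"
    using assms(4) by (auto intro: markov_equiv_between)
  then have "markov_equiv V (D, B) (D - Q \<union> S, B)"
    by (auto simp: markov_equiv_def)
  moreover have "is_admg V (D - Q \<union> S, B)"
    using admg assms(4) \<open>acyclic (D \<union> Q)\<close> \<open>D \<union> Q \<subseteq> V \<times> V\<close>
    by (auto simp: is_admg_def elim: acyclic_subset)
  ultimately show ?thesis
    by (simp add: MEC_def)
qed

lemma two_pow_card_le_card_MEC:
  assumes "finite V" "is_admg V (D, B)" "Q \<subseteq> shortcuts D B"
  shows "2 ^ card Q \<le> card (MEC V (D, B))"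
proof -
  have "Q \<subseteq> V \<times> V"
    using assms(2,3) shortcuts_subset_trancl trancl_subset_Sigma[of D V]
    by (fastforce simp: is_admg_def)
  then have "finite Q"
    using assms(1) finite_subset by blast
  have "inj_on (\<lambda>S. (D - Q \<union> S, B)) (Pow Q)"
    by (rule inj_onI) blast
  then have "card (Pow Q) \<le> card (MEC V (D, B))"
    using shortcut_variant_in_MEC[OF assms] finite_MEC[OF assms(1)]
    by (intro card_inj_on_le) auto
  then show ?thesis
    using \<open>finite Q\<close> by (simp add: card_Pow)
qed

lemma card_le_card_image_mult:
  assumes "inj_on (\<lambda>i. (f i, g i)) I" "g ` I \<subseteq> V" "finite I" "finite V"
  shows "card I \<le> card (f ` I) * card V"
proof -
  have "card I \<le> card (f ` I \<times> V)"
    using assms by (intro card_inj_on_le) auto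
  then show ?thesis
    by (simp add: card_cartesian_product)
qed

lemma two_powr_div_le_two_pow:
  assumes "m \<le> q * n" "1 \<le> c"
  shows "2 powr (real m / (c * real n)) \<le> 2 ^ q"
proof (cases "n = 0")
  case False
  have "real m / (c * real n) \<le> real m / real n"
    using assms(2) False by (simp add: frac_le)
  also have "\<dots> \<le> real q"
    using assms(1) False by (simp add: divide_le_eq flip: of_nat_mult)
  finally show ?thesis
    by (simp add: powr_realpow [symmetric])
qed simp

theorem mainTheorem10:
  fixes V :: "'v set" and G :: "'v admg" and m :: nat and T :: "nat \<Rightarrow> 'v set"
  assumes "finite V"
    and "is_admg V G"
    and "inj_on T {..<m}"
    and "\<forall>i < m. T i \<subseteq> V \<and> card (T i) = 3 \<and>
           (\<exists>a b c. T i = {a, b, c} \<and> (a, b) \<in> fst G \<and> (b, c) \<in> fst G \<and> (b, c) \<in> snd G)"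
  shows "real (card (MEC V G)) \<ge> 2 powr (real m / (3 * real (card V)))"
proof -
  obtain a b c where abc: "\<And>i. i < m \<Longrightarrow> T i = {a i, b i, c i} \<and> T i \<subseteq> V \<and>
      (a i, b i) \<in> fst G \<and> (b i, c i) \<in> fst G \<and> (b i, c i) \<in> snd G"
    using assms(4) by metis
  define Q where "Q = (\<lambda>i. (a i, c i)) ` {..<m}"
  have "Q \<subseteq> shortcuts (fst G) (snd G)"
    using abc by (auto simp: Q_def shortcuts_def)
  then have "2 ^ card Q \<le> card (MEC V G)"
    using two_pow_card_le_card_MEC[of V "fst G" "snd G" Q] assms(1,2) by simp
  have "inj_on (\<lambda>i. ((a i, c i), b i)) {..<m}"
  proof (rule inj_onI)
    fix i j assume "i \<in> {..<m}" "j \<in> {..<m}" "((a i, c i), b i) = ((a j, c j), b j)"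
    then have "T i = T j"
      using abc by simp
    with assms(3) show "i = j"
      using \<open>i \<in> {..<m}\<close> \<open>j \<in> {..<m}\<close> by (rule inj_onD)
  qed
  moreover have "b ` {..<m} \<subseteq> V"
    using abc by blast
  ultimately have "m \<le> card Q * card V"
    using card_le_card_image_mult[of "\<lambda>i. (a i, c i)" b "{..<m}" V] assms(1)
    unfolding Q_def by simp
  then have "2 powr (real m / (3 * real (card V))) \<le> 2 ^ card Q"
    by (rule two_powr_div_le_two_pow) simp
  also have "\<dots> \<le> real (card (MEC V G))"
    using \<open>2 ^ card Q \<le> card (MEC V G)\<close> by (metis of_nat_le_iff of_nat_numeral of_nat_power)
  finally show ?thesis .
qed

end
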